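(* Let $\vec n,\vec m\in\mathbb{Z}_{\ge0}^M$ with $\sum_i n_i=\sum_i m_i=N$ and $\vec n\prec\vec m$. Let $v_{\vec x}=\prod_{i=1}^M\sqrt{x_i!/x_i^{x_i}}$ (with $0^0=1$). Then $v_{\vec m}\le v_{\vec n}$; consequently, for any $\epsilon>0$, the error bound $\mathcal{E}_{\vec n\preceq\vec m}=\epsilon\, v_{\vec m}/v_{\vec n}$ satisfies $\mathcal{E}_{\vec n\preceq\vec m}\le\epsilon$, with equality when $\vec m$ is a permutation of $\vec n$. Furthermore, if $\vec n_1,\vec n_2,\vec m_1,\vec m_2\in\mathbb{Z}_{\ge 0}^M$ all have entry sum $N$, then: (i) if $\vec n_1$ is a permutation of $\vec n_2$ and $\vec n_1\prec\vec m_1\prec\vec m_2$, then $\mathcal{E}_{\vec n_1\preceq\vec m_1}\ge\mathcal{E}_{\vec n_2\preceq\vec m_2}$; (ii) if $\vec n_1\prec\vec n_2\prec\vec m_1$ and $\vec m_1$ is a permutation of $\vec m_2$, then $\mathcal{E}_{\vec n_1\preceq\vec m_1}\le\mathcal{E}_{\vec n_2\preceq\vec m_2}$.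
   Context: Majorization: for vectors $\vec x,\vec y\in\mathbb{R}_{\ge 0}^d$ with entries sorted non-increasingly $x_{[1]}\ge\dots\ge x_{[d]}$, $y_{[1]}\ge\dots\ge y_{[d]}$, $\vec x\prec\vec y$ means $\sum_{i=1}^k x_{[i]}\le\sum_{i=1}^k y_{[i]}$ for all $1\le k<d$ and equality of the total sums. *)

theory Defs
  imports "HOL-Analysis.Analysis" "HOL-Library.Multiset"
begin

(* Vectors in Z_{>=0}^M are represented as lists of naturals of length M. *)

definition sort_desc :: "nat list \<Rightarrow> nat list" where
  "sort_desc xs = rev (sort xs)"

definition majorized :: "nat list \<Rightarrow> nat list \<Rightarrow> bool" (infix "\<prec>\<^sub>m" 50) where
  "majorized x y \<longleftrightarrow> length x = length y \<and>
     (\<forall>k. 1 \<le> k \<and> k < length x \<longrightarrow>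
        sum_list (take k (sort_desc x)) \<le> sum_list (take k (sort_desc y))) \<and>
     sum_list x = sum_list y"

(* v_x = prod_i sqrt (x_i! / x_i^{x_i}), with 0^0 = 1 (as in Isabelle: 0 ^ 0 = 1) *)
definition vfun :: "nat list \<Rightarrow> real" where
  "vfun x = (\<Prod>i<length x. sqrt (fact (x ! i) / (real (x ! i)) ^ (x ! i)))"

definition errbound :: "real \<Rightarrow> nat list \<Rightarrow> nat list \<Rightarrow> real" where
  "errbound eps n m = eps * vfun m / vfun n"

end

theory Submission
  imports Defs
begin

text \<open>
  Write \<open>ln v\<^sub>x = (\<Sum>i. \<phi> (x\<^sub>i)) / 2\<close> with \<open>\<phi> a = ln (a! / a\<^sup>a)\<close>. The increments
  \<open>\<phi> (j+1) - \<phi> j = - j ln (1 + 1/j)\<close> decrease because \<open>(1 + 1/j)\<^sup>j\<close> increases, so \<open>\<phi>\<close> is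
  concave on the naturals, and Karamata's inequality gives \<open>\<Sum> \<phi> (m\<^sub>i) \<le> \<Sum> \<phi> (n\<^sub>i)\<close>
  whenever \<open>n \<prec> m\<close>. On the naturals Karamata reduces to the functions \<open>a \<mapsto> min a s\<close>:
  a concave sequence on \<open>{0..K}\<close> is an affine function plus a nonnegative combination of them,
  and \<open>n \<prec> m\<close> gives \<open>\<Sum> min m\<^sub>i s \<le> \<Sum> min n\<^sub>i s\<close> by comparing both sides with the sum of
  the \<open>k\<close> largest entries, \<open>k\<close> being the number of entries of \<open>n\<close> above \<open>s\<close>. The statements
  about the error bound follow, as \<open>v\<close> is invariant under permutations.
\<close>

lemma mset_sort_desc [simp]: "mset (sort_desc xs) = mset xs"
  by (simp add: sort_desc_def)

lemma sum_list_sort_desc [simp]: "sum_list (sort_desc xs) = sum_list xs"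
  by (metis mset_sort_desc sum_mset_sum_list)

lemma length_sort_desc [simp]: "length (sort_desc xs) = length xs"
  by (simp add: sort_desc_def)

lemma majorized_sum_take_le:
  assumes "x \<prec>\<^sub>m y"
  shows "sum_list (take k (sort_desc x)) \<le> sum_list (take k (sort_desc y))"
proof -
  have len: "length x = length y" and sum: "sum_list x = sum_list y"
    using assms by (auto simp: majorized_def)
  consider "k = 0" | "1 \<le> k" "k < length x" | "length x \<le> k" by linarith
  then show ?thesis
  proof cases
    case 2
    then show ?thesis using assms by (auto simp: majorized_def)
  next
    case 3
    then show ?thesis using len sum by simp
  qed simp
qed

lemma sum_list_min_add_sum_take_le:
  fixes ys :: "nat list"
  shows "sum_list (map (\<lambda>a. min a s) ys) + sum_list (take k ys) \<le> k * s + sum_list ys"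
proof (induction ys arbitrary: k)
  case (Cons y ys)
  have "min y s \<le> y" "min y s \<le> s" by auto
  then show ?case using Cons.IH[of 0] Cons.IH[of "k - 1"] by (cases k) auto
qed simp

lemma sum_list_min_add_sum_filter:
  fixes xs :: "nat list"
  shows "sum_list (map (\<lambda>a. min a s) xs) + sum_list (filter (\<lambda>a. s < a) xs)
         = length (filter (\<lambda>a. s < a) xs) * s + sum_list xs"
  by (induction xs) auto

lemma take_sort_desc_eq_filter:
  fixes xs :: "nat list"
  shows "take (length (filter (\<lambda>a. s < a) xs)) (sort_desc xs) = filter (\<lambda>a. s < a) (sort_desc xs)"
proof -
  have "filter (\<lambda>a. s < a) (sort_desc xs) = takeWhile (\<lambda>a. s < a) (sort_desc xs)"
    using filter_equals_takeWhile_sorted_rev[of id "sort_desc xs"] by (simp add: sort_desc_def)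
  moreover have "length (filter (\<lambda>a. s < a) (sort_desc xs)) = length (filter (\<lambda>a. s < a) xs)"
    by (metis mset_filter mset_sort_desc size_mset)
  ultimately show ?thesis by (metis takeWhile_eq_take)
qed

lemma majorized_sum_list_min_le:
  assumes "x \<prec>\<^sub>m y"
  shows "sum_list (map (\<lambda>a. min a s) y) \<le> sum_list (map (\<lambda>a. min a s) x)"
proof -
  define k where "k = length (filter (\<lambda>a. s < a) x)"
  have "sum_list (take k (sort_desc x)) = sum_list (filter (\<lambda>a. s < a) x)"
    unfolding k_def take_sort_desc_eq_filter by (metis mset_filter mset_sort_desc sum_mset_sum_list)
  then have x_eq: "sum_list (map (\<lambda>a. min a s) x) + sum_list (take k (sort_desc x)) = k * s + sum_list x"
    using sum_list_min_add_sum_filter unfolding k_def by metis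
  have "sum_list (map (\<lambda>a. min a s) (sort_desc y)) + sum_list (take k (sort_desc y)) \<le> k * s + sum_list y"
    using sum_list_min_add_sum_take_le[of s "sort_desc y"] by simp
  moreover have "sum_list (map (\<lambda>a. min a s) (sort_desc y)) = sum_list (map (\<lambda>a. min a s) y)"
    by (metis mset_map mset_sort_desc sum_mset_sum_list)
  moreover have "sum_list x = sum_list y"
    using assms by (simp add: majorized_def)
  ultimately show ?thesis
    using x_eq majorized_sum_take_le[OF assms, of k] by linarith
qed

lemma eq_sum_min_second_differences:
  fixes g :: "nat \<Rightarrow> real"
  assumes "a \<le> K"
  shows "g a = g 0 + real a * (g (Suc K) - g K)
    + (\<Sum>t<K. (g (Suc t) - g t - (g (Suc (Suc t)) - g (Suc t))) * real (min a (Suc t)))"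
  using assms
proof (induction K arbitrary: a)
  case (Suc K)
  show ?case
  proof (cases "a = Suc K")
    case True
    have "(\<Sum>t<K. (g (Suc t) - g t - (g (Suc (Suc t)) - g (Suc t))) * real (min K (Suc t)))
        = (\<Sum>t<K. (g (Suc t) - g t - (g (Suc (Suc t)) - g (Suc t))) * real (min a (Suc t)))"
      using True by (intro sum.cong) auto
    then show ?thesis using Suc.IH[of K] True by (simp add: algebra_simps)
  qed (use Suc in \<open>simp add: algebra_simps\<close>)
qed simp

lemma sum_list_eq_sum_min_second_differences:
  fixes g :: "nat \<Rightarrow> real"
  assumes "\<forall>x\<in>set xs. x \<le> K"
  shows "sum_list (map g xs) = real (length xs) * g 0 + real (sum_list xs) * (g (Suc K) - g K)
    + (\<Sum>t<K. (g (Suc t) - g t - (g (Suc (Suc t)) - g (Suc t)))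
                * real (sum_list (map (\<lambda>a. min a (Suc t)) xs)))"
  using assms
proof (induction xs)
  case (Cons x xs)
  define c where "c t = g (Suc t) - g t - (g (Suc (Suc t)) - g (Suc t))" for t
  have "(\<Sum>t<K. c t * real (sum_list (map (\<lambda>a. min a (Suc t)) (x # xs))))
      = (\<Sum>t<K. c t * real (min x (Suc t))) + (\<Sum>t<K. c t * real (sum_list (map (\<lambda>a. min a (Suc t)) xs)))"
    by (simp add: sum.distrib distrib_left)
  then show ?case
    using Cons eq_sum_min_second_differences[of x K g] unfolding c_def by (simp add: algebra_simps)
qed simp

lemma majorized_sum_list_concave_le:
  fixes g :: "nat \<Rightarrow> real"
  assumes concave: "decseq (\<lambda>t. g (Suc t) - g t)" and maj: "x \<prec>\<^sub>m y"
  shows "sum_list (map g y) \<le> sum_list (map g x)"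
proof -
  define K where "K = sum_list x"
  define c where "c t = g (Suc t) - g t - (g (Suc (Suc t)) - g (Suc t))" for t
  have len: "length y = length x" and sum: "sum_list y = sum_list x"
    using maj by (auto simp: majorized_def)
  have "\<forall>a\<in>set x. a \<le> K" "\<forall>a\<in>set y. a \<le> K"
    by (simp add: K_def member_le_sum_list) (simp add: K_def member_le_sum_list flip: sum)
  note expansions = this[THEN sum_list_eq_sum_min_second_differences[where g = g], folded c_def]
  have "(\<Sum>t<K. c t * real (sum_list (map (\<lambda>a. min a (Suc t)) y)))
      \<le> (\<Sum>t<K. c t * real (sum_list (map (\<lambda>a. min a (Suc t)) x)))"
  proof (intro sum_mono mult_left_mono)
    fix t
    show "0 \<le> c t" using decseq_SucD[OF concave, of t] unfolding c_def by simp
    show "real (sum_list (map (\<lambda>a. min a (Suc t)) y)) \<le> real (sum_list (map (\<lambda>a. min a (Suc t)) x))"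
      using majorized_sum_list_min_le[OF maj] by simp
  qed
  then show ?thesis using expansions len sum by simp
qed

lemma incseq_one_plus_inverse_power: "incseq (\<lambda>n. (1 + 1 / real n) ^ n)"
proof (rule incseq_SucI)
  fix n
  show "(1 + 1 / real n) ^ n \<le> (1 + 1 / real (Suc n)) ^ Suc n"
  proof (cases "n = 0")
    case False
    \<comment> \<open>\<open>b = a (1 - 1/s\<^sup>2)\<close>, so by Bernoulli \<open>b\<^bsup>n+1\<^esup> / a\<^sup>n \<ge> b (1 - n/s\<^sup>2) = 1 + 1/s\<^sup>3\<close>\<close>
    define s where "s = real (Suc n)"
    define a where "a = s / (s - 1)"
    define b where "b = (s + 1) / s"
    have s: "2 \<le> s" using False unfolding s_def by simp
    have a_pos: "0 < a" using s unfolding a_def by simp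
    have b_eq: "b = a * (1 - 1 / s\<^sup>2)"
      using s unfolding a_def b_def by (simp add: field_simps power2_eq_square)
    have "real n = s - 1" unfolding s_def by simp
    then have "b * (1 - real n / s\<^sup>2) = (s ^ 3 + 1) / s ^ 3"
      using s unfolding b_def \<open>real n = s - 1\<close> by (simp add: field_simps power2_eq_square power3_eq_cube)
    then have one_le: "1 \<le> b * (1 - real n / s\<^sup>2)"
      using s by simp
    have bernoulli: "1 - real n / s\<^sup>2 \<le> (1 - 1 / s\<^sup>2) ^ n"
      using Bernoulli_inequality[of "- 1 / s\<^sup>2" n] s by (simp add: field_simps)
    have "a ^ n \<le> a ^ n * (b * (1 - real n / s\<^sup>2))"
      using one_le a_pos by simp
    also have "\<dots> \<le> a ^ n * (b * (1 - 1 / s\<^sup>2) ^ n)"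
      using bernoulli a_pos s unfolding b_def by (intro mult_left_mono) auto
    also have "\<dots> = b * (a * (1 - 1 / s\<^sup>2)) ^ n"
      by (simp add: power_mult_distrib)
    also have "\<dots> = b ^ Suc n"
      by (simp flip: b_eq)
    finally show ?thesis
      using s unfolding a_def b_def s_def by (simp add: field_simps)
  qed simp
qed

definition ln_fact_div_power :: "nat \<Rightarrow> real" where
  "ln_fact_div_power a = ln (fact a / real a ^ a)"

lemma fact_div_power_pos: "0 < fact a / real a ^ a"
  by (cases "a = 0") auto

lemma ln_fact_div_power_Suc_diff:
  "ln_fact_div_power (Suc j) - ln_fact_div_power j = - ln ((1 + 1 / real j) ^ j)"
proof (cases "j = 0")
  case False
  have "(1 + 1 / real j) ^ j = (1 + real j) ^ j / real j ^ j"
    using False by (simp add: field_simps power_divide)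
  moreover have "(fact (Suc j) / real (Suc j) ^ Suc j) / (fact j / real j ^ j) = real j ^ j / (1 + real j) ^ j"
    using False by (simp add: fact_Suc)
  ultimately have "(fact (Suc j) / real (Suc j) ^ Suc j) / (fact j / real j ^ j) = inverse ((1 + 1 / real j) ^ j)"
    by simp
  moreover have "0 < (1 + 1 / real j) ^ j"
    by (simp add: add_pos_nonneg)
  ultimately show ?thesis
    unfolding ln_fact_div_power_def ln_divide_pos[OF fact_div_power_pos fact_div_power_pos, symmetric]
    by (simp add: ln_inverse)
qed (simp add: ln_fact_div_power_def)

lemma decseq_ln_fact_div_power_diff:
  "decseq (\<lambda>j. ln_fact_div_power (Suc j) - ln_fact_div_power j)"
proof (rule decseq_SucI)
  fix j
  have "0 < (1 + 1 / real j) ^ j"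
    by (simp add: add_pos_nonneg)
  then have "ln ((1 + 1 / real j) ^ j) \<le> ln ((1 + 1 / real (Suc j)) ^ Suc j)"
    using incseq_SucD[OF incseq_one_plus_inverse_power, of j] by (subst ln_le_cancel_iff) auto
  then show "ln_fact_div_power (Suc (Suc j)) - ln_fact_div_power (Suc j)
      \<le> ln_fact_div_power (Suc j) - ln_fact_div_power j"
    unfolding ln_fact_div_power_Suc_diff by simp
qed

lemma vfun_eq_exp_sum: "vfun x = exp (sum_list (map ln_fact_div_power x) / 2)"
proof -
  have "sqrt y = exp (ln y / 2)" if "0 < y" for y :: real
    using that by (simp add: powr_half_sqrt[symmetric] powr_def)
  then show ?thesis
    unfolding vfun_def ln_fact_div_power_def
    by (simp add: fact_div_power_pos sum_list_sum_nth atLeast0LessThan exp_sum sum_divide_distrib)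
qed

lemma vfun_pos: "0 < vfun x"
  by (simp add: vfun_eq_exp_sum)

lemma vfun_eq_if_mset_eq: "mset x = mset y \<Longrightarrow> vfun x = vfun y"
  unfolding vfun_eq_exp_sum by (metis mset_map sum_mset_sum_list)

lemma majorized_vfun_le: "x \<prec>\<^sub>m y \<Longrightarrow> vfun y \<le> vfun x"
  unfolding vfun_eq_exp_sum
  using majorized_sum_list_concave_le[OF decseq_ln_fact_div_power_diff] by simp

lemma errbound_self: "errbound eps n n = eps"
  using vfun_pos[of n] by (simp add: errbound_def)

lemma errbound_mono:
  assumes "0 < eps" "vfun m \<le> vfun m'" "vfun n' \<le> vfun n"
  shows "errbound eps n m \<le> errbound eps n' m'"
  unfolding errbound_def using assms vfun_pos[of m'] vfun_pos[of n']
  by (intro frac_le) auto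

theorem mainTheorem3:
  fixes M N :: nat and eps :: real
  shows
   "(\<forall>n m. length n = M \<longrightarrow> length m = M \<longrightarrow> sum_list n = N \<longrightarrow> sum_list m = N \<longrightarrow>
        n \<prec>\<^sub>m m \<longrightarrow>
        vfun m \<le> vfun n \<and>
        (eps > 0 \<longrightarrow> errbound eps n m \<le> eps \<and>
           (mset m = mset n \<longrightarrow> errbound eps n m = eps)))
    \<and>
    (\<forall>n1 n2 m1 m2. length n1 = M \<longrightarrow> length n2 = M \<longrightarrow> length m1 = M \<longrightarrow> length m2 = M \<longrightarrow>
        sum_list n1 = N \<longrightarrow> sum_list n2 = N \<longrightarrow> sum_list m1 = N \<longrightarrow> sum_list m2 = N \<longrightarrow>
        eps > 0 \<longrightarrow>
        ((mset n1 = mset n2 \<and> n1 \<prec>\<^sub>m m1 \<and> m1 \<prec>\<^sub>m m2 \<longrightarrow>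
            errbound eps n1 m1 \<ge> errbound eps n2 m2) \<and>
         (n1 \<prec>\<^sub>m n2 \<and> n2 \<prec>\<^sub>m m1 \<and> mset m1 = mset m2 \<longrightarrow>
            errbound eps n1 m1 \<le> errbound eps n2 m2)))"
proof (intro conjI allI impI)
  fix n m :: "nat list"
  assume "n \<prec>\<^sub>m m"
  then show le: "vfun m \<le> vfun n"
    by (rule majorized_vfun_le)
  assume eps: "eps > 0"
  show "errbound eps n m \<le> eps"
    using errbound_mono[of eps m n n n] eps le by (simp add: errbound_self)
  assume "mset m = mset n"
  then have "vfun m = vfun n"
    by (rule vfun_eq_if_mset_eq)
  then show "errbound eps n m = eps"
    using errbound_self[of eps n] by (simp add: errbound_def)
next
  fix n1 n2 m1 m2 :: "nat list"
  assume eps: "eps > 0"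
  show "errbound eps n2 m2 \<le> errbound eps n1 m1"
    if "mset n1 = mset n2 \<and> n1 \<prec>\<^sub>m m1 \<and> m1 \<prec>\<^sub>m m2"
    using that errbound_mono[OF eps] majorized_vfun_le vfun_eq_if_mset_eq by (metis order_refl)
  show "errbound eps n1 m1 \<le> errbound eps n2 m2"
    if "n1 \<prec>\<^sub>m n2 \<and> n2 \<prec>\<^sub>m m1 \<and> mset m1 = mset m2"
    using that errbound_mono[OF eps] majorized_vfun_le vfun_eq_if_mset_eq by (metis order_refl)
qed

end
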